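(* Let $X$ be a Banach space and $J\subset X$ a closed subspace such that $(X,J)$ has the CQLP, and let $\pi:X\to X/J$ be the quotient map. Let $(x_n)_{n\ge1}\subset X$ be such that $(\pi(x_n))_{n\ge1}$ is a relatively compact sequence in $X/J$. Then there is a relatively compact sequence $(z_n)_{n\ge1}\subset X$ with $\pi(z_n)=\pi(x_n)$ for all $n$ and $\sup_n\|z_n\|=\sup_n\|\pi(x_n)\|$.
   Context: The pair $(X,J)$ has the compact quotient lifting property (CQLP) if for every Banach space $Z$ and every compact linear operator $T:Z\to X/J$ there is a compact linear operator $S:Z\to X$ with $\pi\circ S=T$ and $\|S\|=\|T\|$. *)

theory Defs
  imports "HOL-Analysis.Analysis"
begin

definition qmap :: "'a::real_vector set \<Rightarrow> 'a \<Rightarrow> 'a set" where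
  "qmap J x = {x + j | j. j \<in> J}"

definition quotient_space :: "'a::real_vector set \<Rightarrow> 'a set set" where
  "quotient_space J = range (qmap J)"

definition qnorm :: "'a::real_normed_vector set \<Rightarrow> real" where
  "qnorm C = (INF x\<in>C. norm x)"

definition qdist :: "'a::real_normed_vector set \<Rightarrow> 'a set \<Rightarrow> real" where
  "qdist C D = (INF p\<in>C \<times> D. norm (fst p - snd p))"

definition qrel_compact :: "'a::real_normed_vector set \<Rightarrow> 'a set set \<Rightarrow> bool" where
  "qrel_compact J S \<longleftrightarrow> S \<subseteq> quotient_space J \<and>
     (\<forall>\<sigma>::nat \<Rightarrow> 'a set. (\<forall>n. \<sigma> n \<in> S) \<longrightarrow>
        (\<exists>(r::nat \<Rightarrow> nat) C. strict_mono r \<and> C \<in> quotient_space J \<and> (\<lambda>n. qdist (\<sigma> (r n)) C) \<longlonglongrightarrow> 0))"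

text \<open>A Banach space Z is represented by a carrier Z, a linear subspace of the real vector
  space of all real sequences (pointwise operations), together with an arbitrary complete norm N
  on Z.  (Every Banach space of Hamel dimension at most the continuum, in particular every
  separable Banach space, is isometrically isomorphic to such a structure.)\<close>
type_synonym zvec = "nat \<Rightarrow> real"

definition zadd :: "zvec \<Rightarrow> zvec \<Rightarrow> zvec" where "zadd f g = (\<lambda>n. f n + g n)"
definition zscale :: "real \<Rightarrow> zvec \<Rightarrow> zvec" where "zscale c f = (\<lambda>n. c * f n)"
definition zzero :: zvec where "zzero = (\<lambda>n. 0)"

definition banach_struct :: "zvec set \<Rightarrow> (zvec \<Rightarrow> real) \<Rightarrow> bool" where
  "banach_struct Z N \<longleftrightarrow>
     zzero \<in> Z \<and> (\<forall>f\<in>Z. \<forall>g\<in>Z. zadd f g \<in> Z) \<and> (\<forall>c. \<forall>f\<in>Z. zscale c f \<in> Z) \<and>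
     (\<forall>f\<in>Z. 0 \<le> N f \<and> (N f = 0 \<longleftrightarrow> f = zzero)) \<and>
     (\<forall>f\<in>Z. \<forall>g\<in>Z. N (zadd f g) \<le> N f + N g) \<and>
     (\<forall>c. \<forall>f\<in>Z. N (zscale c f) = \<bar>c\<bar> * N f) \<and>
     (\<forall>s. (\<forall>n. s n \<in> Z) \<longrightarrow>
        (\<forall>e>0. \<exists>M. \<forall>m\<ge>M. \<forall>n\<ge>M. N (zadd (s m) (zscale (-1) (s n))) < e) \<longrightarrow>
        (\<exists>f\<in>Z. (\<lambda>n. N (zadd (s n) (zscale (-1) f))) \<longlonglongrightarrow> 0))"

definition zball :: "zvec set \<Rightarrow> (zvec \<Rightarrow> real) \<Rightarrow> zvec set" where
  "zball Z N = {z \<in> Z. N z \<le> 1}"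

definition lin_op :: "zvec set \<Rightarrow> (zvec \<Rightarrow> 'a::real_vector) \<Rightarrow> bool" where
  "lin_op Z S \<longleftrightarrow> (\<forall>f\<in>Z. \<forall>g\<in>Z. S (zadd f g) = S f + S g) \<and>
                   (\<forall>c. \<forall>f\<in>Z. S (zscale c f) = c *\<^sub>R S f)"

definition op_norm :: "zvec set \<Rightarrow> (zvec \<Rightarrow> real) \<Rightarrow> (zvec \<Rightarrow> 'a::real_normed_vector) \<Rightarrow> real" where
  "op_norm Z N S = (SUP z\<in>zball Z N. norm (S z))"

definition compact_op :: "zvec set \<Rightarrow> (zvec \<Rightarrow> real) \<Rightarrow> (zvec \<Rightarrow> 'a::real_normed_vector) \<Rightarrow> bool" where
  "compact_op Z N S \<longleftrightarrow> lin_op Z S \<and> compact (closure (S ` zball Z N))"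

definition qlin_op :: "'a::real_vector set \<Rightarrow> zvec set \<Rightarrow> (zvec \<Rightarrow> 'a set) \<Rightarrow> bool" where
  "qlin_op J Z T \<longleftrightarrow> (\<forall>f\<in>Z. T f \<in> quotient_space J) \<and>
     (\<forall>f\<in>Z. \<forall>g\<in>Z. \<forall>a\<in>T f. \<forall>b\<in>T g. T (zadd f g) = qmap J (a + b)) \<and>
     (\<forall>c. \<forall>f\<in>Z. \<forall>a\<in>T f. T (zscale c f) = qmap J (c *\<^sub>R a))"

definition qop_norm :: "zvec set \<Rightarrow> (zvec \<Rightarrow> real) \<Rightarrow> (zvec \<Rightarrow> 'a::real_normed_vector set) \<Rightarrow> real" where
  "qop_norm Z N T = (SUP z\<in>zball Z N. qnorm (T z))"

definition qcompact_op :: "'a::real_normed_vector set \<Rightarrow> zvec set \<Rightarrow> (zvec \<Rightarrow> real) \<Rightarrow> (zvec \<Rightarrow> 'a set) \<Rightarrow> bool" where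
  "qcompact_op J Z N T \<longleftrightarrow> qlin_op J Z T \<and> qrel_compact J (T ` zball Z N)"

definition CQLP :: "'a::banach set \<Rightarrow> bool" where
  "CQLP J \<longleftrightarrow> (\<forall>Z N T. banach_struct Z N \<longrightarrow> qcompact_op J Z N T \<longrightarrow>
     (\<exists>S. compact_op Z N S \<and> (\<forall>z\<in>Z. qmap J (S z) = T z) \<and> op_norm Z N S = qop_norm Z N T))"

end

theory Submission
  imports Defs
begin

text \<open>
  Lift every coset \<open>\<pi>(x\<^sub>n)\<close> to some \<open>w\<^sub>n\<close> of norm at most \<open>\<parallel>\<pi>(x\<^sub>n)\<parallel> + 1\<close> and consider the
  operator \<open>T a = \<pi>(\<Sum> a\<^sub>n w\<^sub>n)\<close> from \<open>\<ell>\<^sub>1\<close> to \<open>X/J\<close>. It has norm at most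
  \<open>M = sup\<^sub>n \<parallel>\<pi>(x\<^sub>n)\<parallel>\<close>, and it is compact: once the \<open>\<pi>(w\<^sub>n)\<close> are covered by \<open>\<epsilon>\<close>-balls
  around \<open>\<pi>(w\<^sub>0), \<dots>, \<pi>(w\<^sub>L\<^sub>-\<^sub>1)\<close>, the image of the unit ball lies within \<open>\<epsilon>\<close> of the
  image of the compact set of combinations \<open>\<Sum>\<^sub>m\<^sub><\<^sub>L b\<^sub>m w\<^sub>m\<close> with \<open>\<bar>b\<^sub>m\<bar> \<le> 1\<close>.
  The CQLP yields a compact lift \<open>S\<close> of \<open>T\<close> with \<open>\<parallel>S\<parallel> = \<parallel>T\<parallel> \<le> M\<close>, and
  \<open>z\<^sub>n = S e\<^sub>n\<close> does the job: it lies in the relatively compact set \<open>S(ball)\<close>, lifts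
  \<open>\<pi>(x\<^sub>n)\<close>, and \<open>\<parallel>\<pi>(x\<^sub>n)\<parallel> \<le> \<parallel>z\<^sub>n\<parallel> \<le> M\<close>.
\<close>

section \<open>Cosets and the distance to a subspace\<close>

lemma mem_qmap_iff: "a \<in> qmap J u \<longleftrightarrow> a - u \<in> J"
  unfolding qmap_def by (auto intro!: exI[of _ "a - u"])

lemma qmap_eq_iff:
  assumes "subspace J"
  shows "qmap J u = qmap J v \<longleftrightarrow> u - v \<in> J"
proof
  assume "qmap J u = qmap J v"
  moreover have "u \<in> qmap J u"
    using assms by (simp add: mem_qmap_iff subspace_0)
  ultimately show "u - v \<in> J"
    by (simp add: mem_qmap_iff)
next
  assume uv: "u - v \<in> J"
  have "a - v \<in> J \<longleftrightarrow> a - u \<in> J" for a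
  proof
    assume "a - v \<in> J"
    then have "(a - v) - (u - v) \<in> J"
      using uv by (rule subspace_diff[OF assms])
    then show "a - u \<in> J"
      by simp
  next
    assume "a - u \<in> J"
    then have "(a - u) + (u - v) \<in> J"
      using uv by (rule subspace_add[OF assms])
    then show "a - v \<in> J"
      by simp
  qed
  then show "qmap J u = qmap J v"
    by (auto simp: mem_qmap_iff)
qed

lemma qmap_in_quotient_space [simp]: "qmap J u \<in> quotient_space J"
  by (simp add: quotient_space_def)

lemma quotient_spaceE:
  assumes "C \<in> quotient_space J"
  obtains u where "C = qmap J u"
  using assms unfolding quotient_space_def by blast

lemma qnorm_qmap:
  fixes J :: "'a::real_normed_vector set"
  assumes "subspace J"
  shows "qnorm (qmap J u) = infdist u J"
proof -
  have "norm ` qmap J u = dist u ` J"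
  proof -
    have "norm ` qmap J u = (\<lambda>j. norm (u + j)) ` J"
      unfolding qmap_def by auto
    also have "\<dots> = (\<lambda>j. dist u (- j)) ` J"
      by (simp add: dist_norm)
    also have "\<dots> = dist u ` uminus ` J"
      by (simp add: image_image)
    also have "uminus ` J = J"
      using assms subspace_neg by (force intro: image_eqI[of _ uminus "- _"])
    finally show ?thesis .
  qed
  moreover have "J \<noteq> {}"
    using assms subspace_0 by blast
  ultimately show ?thesis
    unfolding qnorm_def by (simp add: infdist_notempty)
qed

lemma qdist_qmap:
  fixes J :: "'a::real_normed_vector set"
  assumes "subspace J"
  shows "qdist (qmap J u) (qmap J v) = infdist (u - v) J"
proof -
  have "(\<lambda>p. norm (fst p - snd p)) ` (qmap J u \<times> qmap J v) = norm ` qmap J (u - v)"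
  proof (intro equalityI subsetI)
    fix t assume "t \<in> (\<lambda>p. norm (fst p - snd p)) ` (qmap J u \<times> qmap J v)"
    then obtain j k where "j \<in> J" "k \<in> J" and t: "t = norm ((u - v) + (j - k))"
      by (auto simp: qmap_def algebra_simps)
    then have "(u - v) + (j - k) \<in> qmap J (u - v)"
      using assms subspace_diff unfolding qmap_def by blast
    then show "t \<in> norm ` qmap J (u - v)"
      unfolding t by (rule imageI)
  next
    fix t assume "t \<in> norm ` qmap J (u - v)"
    then obtain j where "j \<in> J" and t: "t = norm ((u - v) + j)"
      by (auto simp: qmap_def)
    then have "(u + j, v + 0) \<in> qmap J u \<times> qmap J v"
      using subspace_0[OF assms] unfolding qmap_def by blast
    moreover have "t = norm (fst (u + j, v + 0) - snd (u + j, v + 0))"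
      unfolding t by (simp add: algebra_simps)
    ultimately show "t \<in> (\<lambda>p. norm (fst p - snd p)) ` (qmap J u \<times> qmap J v)"
      by (rule rev_image_eqI)
  qed
  then show ?thesis
    using qnorm_qmap[OF assms] by (simp add: qdist_def qnorm_def)
qed

lemma infdist_subspace_eq_INF:
  fixes J :: "'a::real_normed_vector set"
  assumes "subspace J"
  shows "infdist x J = (INF j\<in>J. dist x j)"
  using subspace_0[OF assms] by (intro infdist_notempty) blast

lemma infdist_subspace_le_norm:
  fixes J :: "'a::real_normed_vector set"
  assumes "subspace J"
  shows "infdist x J \<le> norm x"
  using infdist_le[OF subspace_0[OF assms], of x] by simp

lemma infdist_subspace_lessE:
  fixes J :: "'a::real_normed_vector set"
  assumes "subspace J" and "infdist x J < r"
  obtains j where "j \<in> J" and "norm (x - j) < r"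
proof -
  have "Inf (dist x ` J) < r"
    using assms by (simp only: infdist_subspace_eq_INF)
  moreover have "dist x ` J \<noteq> {}"
    using subspace_0[OF assms(1)] by blast
  ultimately obtain j where "j \<in> J" "dist x j < r"
    by (metis cInf_lessD imageE)
  then show ?thesis
    using that by (simp add: dist_norm)
qed

lemma qmap_lift_norm_less:
  fixes J :: "'a::real_normed_vector set"
  assumes "subspace J" and "infdist x J < r"
  obtains y where "qmap J y = qmap J x" and "norm y < r"
proof -
  obtain j where j: "j \<in> J" "norm (x - j) < r"
    using assms by (rule infdist_subspace_lessE)
  moreover have "qmap J (x - j) = qmap J x"
    using j(1) assms(1) by (simp add: qmap_eq_iff subspace_neg)
  ultimately show ?thesis
    using that by blast
qed

lemma infdist_subspace_translate:
  fixes J :: "'a::real_normed_vector set"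
  assumes "subspace J" and "j \<in> J"
  shows "infdist (x + j) J = infdist x J"
proof -
  have "qmap J (x + j) = qmap J x"
    using assms by (simp add: qmap_eq_iff)
  then show ?thesis
    by (metis qnorm_qmap[OF assms(1)])
qed

lemma infdist_subspace_add_le:
  fixes J :: "'a::real_normed_vector set"
  assumes "subspace J"
  shows "infdist (a + b) J \<le> infdist a J + infdist b J"
proof -
  have "infdist (a + b) J - infdist a J \<le> dist b j" if "j \<in> J" for j
  proof -
    have "infdist (a + b) J = infdist ((a + (b - j)) + j) J"
      by simp
    also have "\<dots> = infdist (a + (b - j)) J"
      using assms that by (rule infdist_subspace_translate)
    also have "\<dots> \<le> infdist a J + dist (a + (b - j)) a"
      by (rule infdist_triangle)
    finally show ?thesis
      by (simp add: dist_norm)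
  qed
  then have "infdist (a + b) J - infdist a J \<le> (INF j\<in>J. dist b j)"
    using assms subspace_0 by (intro cINF_greatest) auto
  then show ?thesis
    by (simp add: infdist_subspace_eq_INF[OF assms, of b])
qed

lemma infdist_subspace_scaleR_le:
  fixes J :: "'a::real_normed_vector set"
  assumes "subspace J"
  shows "infdist (c *\<^sub>R a) J \<le> \<bar>c\<bar> * infdist a J"
proof (cases "c = 0")
  case True
  then show ?thesis
    by (simp add: subspace_0[OF assms])
next
  case False
  have "infdist (c *\<^sub>R a) J / \<bar>c\<bar> \<le> dist a j" if "j \<in> J" for j
  proof -
    have "infdist (c *\<^sub>R a) J \<le> dist (c *\<^sub>R a) (c *\<^sub>R j)"
      using assms that by (intro infdist_le subspace_scale)
    also have "\<dots> = \<bar>c\<bar> * dist a j"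
      by (simp add: dist_norm flip: scaleR_diff_right)
    finally show ?thesis
      using False by (simp add: divide_simps mult.commute)
  qed
  then have "infdist (c *\<^sub>R a) J / \<bar>c\<bar> \<le> (INF j\<in>J. dist a j)"
    using assms subspace_0 by (intro cINF_greatest) auto
  then show ?thesis
    using False by (simp add: infdist_subspace_eq_INF[OF assms, of a] divide_simps mult.commute)
qed

lemma infdist_subspace_minus_commute:
  fixes J :: "'a::real_normed_vector set"
  assumes "subspace J"
  shows "infdist (a - b) J = infdist (b - a) J"
proof -
  have "infdist (u - v) J \<le> infdist (v - u) J" for u v
    using infdist_subspace_scaleR_le[OF assms, of "-1" "v - u"] by simp
  from this[of a b] this[of b a] show ?thesis
    by (rule antisym)
qed

lemma infdist_subspace_sum_le:
  fixes J :: "'a::real_normed_vector set"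
  assumes "subspace J"
  shows "infdist (\<Sum>i\<in>I. f i) J \<le> (\<Sum>i\<in>I. infdist (f i) J)"
proof (induction I rule: infinite_finite_induct)
  case (insert i I)
  then show ?case
    using infdist_subspace_add_le[OF assms, of "f i" "sum f I"] by simp
qed (simp_all add: subspace_0[OF assms])

lemma infdist_subspace_suminf_le:
  fixes J :: "'a::banach set"
  assumes "subspace J" and "summable (\<lambda>n. norm (f n))"
  shows "summable (\<lambda>n. infdist (f n) J)"
    and "infdist (suminf f) J \<le> (\<Sum>n. infdist (f n) J)"
proof -
  show summable: "summable (\<lambda>n. infdist (f n) J)"
    by (rule summable_comparison_test'[OF assms(2)])
      (simp add: infdist_nonneg infdist_subspace_le_norm[OF assms(1)])
  have "(\<lambda>K. infdist (\<Sum>n<K. f n) J) \<longlonglongrightarrow> infdist (suminf f) J"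
    using summable_LIMSEQ[OF summable_norm_cancel[OF assms(2)]] by (rule tendsto_infdist)
  moreover have "infdist (\<Sum>n<K. f n) J \<le> (\<Sum>n. infdist (f n) J)" for K
  proof -
    have "infdist (\<Sum>n<K. f n) J \<le> (\<Sum>n<K. infdist (f n) J)"
      by (rule infdist_subspace_sum_le[OF assms(1)])
    also have "\<dots> \<le> (\<Sum>n. infdist (f n) J)"
      using summable by (rule sum_le_suminf) (auto simp: infdist_nonneg)
    finally show ?thesis .
  qed
  ultimately show "infdist (suminf f) J \<le> (\<Sum>n. infdist (f n) J)"
    by (intro LIMSEQ_le_const2) auto
qed

lemma subspace_lift_convergent:
  fixes J :: "'a::banach set"
  assumes "subspace J" and summable: "summable (\<lambda>k. infdist (v (Suc k) - v k) J)"
  obtains u where "\<And>k. u k - v k \<in> J" and "convergent u"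
proof -
  have "\<exists>j\<in>J. norm (v (Suc k) - v k - j) < infdist (v (Suc k) - v k) J + (1/2)^k" for k
    using infdist_subspace_lessE[OF assms(1)] by (metis less_add_same_cancel1 zero_less_power
        zero_less_divide_iff zero_less_one zero_less_numeral)
  then obtain j where j: "\<And>k. j k \<in> J"
    and j_close: "\<And>k. norm (v (Suc k) - v k - j k) < infdist (v (Suc k) - v k) J + (1/2)^k"
    by metis
  define u where "u k = v k - (\<Sum>i<k. j i)" for k
  have "u k - v k \<in> J" for k
    using j assms(1) unfolding u_def by (simp add: subspace_neg subspace_sum)
  moreover have "convergent u"
  proof -
    have bound: "summable (\<lambda>k. infdist (v (Suc k) - v k) J + (1/2)^k)"
      using summable by (intro summable_add summable_geometric) auto
    have "u (Suc k) - u k = v (Suc k) - v k - j k" for k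
      unfolding u_def by (simp add: diff_diff_eq2 diff_add_eq_diff_diff_swap)
    then have step_le: "norm (u (Suc k) - u k) \<le> infdist (v (Suc k) - v k) J + (1/2)^k" for k
      using j_close[of k] by simp
    have "summable (\<lambda>k. norm (u (Suc k) - u k))"
      by (rule summable_comparison_test'[OF bound, where N=0]) (simp add: step_le)
    then have "summable (\<lambda>k. u (Suc k) - u k)"
      by (rule summable_norm_cancel)
    then have "(\<lambda>n. u 0 + (\<Sum>k<n. u (Suc k) - u k)) \<longlonglongrightarrow> u 0 + (\<Sum>k. u (Suc k) - u k)"
      by (intro tendsto_add tendsto_const summable_LIMSEQ)
    then show ?thesis
      unfolding convergent_def sum_lessThan_telescope by auto
  qed
  ultimately show ?thesis
    using that by blast
qed

section \<open>The quotient as a complete metric space\<close>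

lemma (in Metric_space) MCauchy_fast_subsequence:
  assumes "MCauchy \<sigma>"
  obtains r where "strict_mono r" and "\<And>k. d (\<sigma> (r k)) (\<sigma> (r (Suc k))) < (1/2)^k"
proof -
  have "\<exists>N. \<forall>n n'. N \<le> n \<longrightarrow> N \<le> n' \<longrightarrow> d (\<sigma> n) (\<sigma> n') < (1/2)^k" for k
    using assms unfolding MCauchy_def by simp
  then obtain N where N: "\<And>k n n'. N k \<le> n \<Longrightarrow> N k \<le> n' \<Longrightarrow> d (\<sigma> n) (\<sigma> n') < (1/2)^k"
    by metis
  define r where "r k = k + (\<Sum>i\<le>k. N i)" for k
  have "strict_mono r"
    unfolding strict_mono_Suc_iff r_def by simp
  moreover have "N k \<le> r k" for k
    using member_le_sum[of k "{..k}" N] unfolding r_def by simp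
  moreover have "r k \<le> r (Suc k)" for k
    unfolding r_def by simp
  ultimately show ?thesis
    using that N by (meson order_trans)
qed

lemma (in Metric_space) mtotally_bounded_of_finite_nets:
  assumes "S \<subseteq> M" and nets: "\<And>\<epsilon>. \<epsilon> > 0 \<Longrightarrow> \<exists>K. finite K \<and> K \<subseteq> M \<and> S \<subseteq> (\<Union>x\<in>K. mball x \<epsilon>)"
  shows "mtotally_bounded S"
  unfolding mtotally_bounded_def
proof (intro allI impI)
  fix \<epsilon> :: real assume "\<epsilon> > 0"
  then obtain K where K: "finite K" "K \<subseteq> M" "S \<subseteq> (\<Union>x\<in>K. mball x (\<epsilon>/2))"
    using nets[of "\<epsilon>/2"] by auto
  define K' where "K' = {x \<in> K. mball x (\<epsilon>/2) \<inter> S \<noteq> {}}"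
  have "\<forall>x\<in>K'. \<exists>y. y \<in> mball x (\<epsilon>/2) \<inter> S"
    unfolding K'_def by blast
  from bchoice[OF this] obtain p where p: "\<forall>x\<in>K'. p x \<in> mball x (\<epsilon>/2) \<inter> S" ..
  show "\<exists>K. finite K \<and> K \<subseteq> S \<and> S \<subseteq> (\<Union>x\<in>K. mball x \<epsilon>)"
  proof (intro exI conjI)
    show "finite (p ` K')"
      using K(1) by (simp add: K'_def)
    show "p ` K' \<subseteq> S"
      using p by blast
    show "S \<subseteq> (\<Union>y\<in>p ` K'. mball y \<epsilon>)"
    proof
      fix s assume "s \<in> S"
      then obtain x where x: "x \<in> K" "s \<in> mball x (\<epsilon>/2)"
        using K(3) by blast
      then have "x \<in> K'"
        using \<open>s \<in> S\<close> by (auto simp: K'_def)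
      then have px: "p x \<in> mball x (\<epsilon>/2)" "p x \<in> S"
        using p by blast+
      have "d (p x) s \<le> d (p x) x + d x s"
        using px x by (intro triangle) auto
      also have "\<dots> < \<epsilon>"
        using px x by (simp add: commute)
      finally have "s \<in> mball (p x) \<epsilon>"
        using px x by simp
      then show "s \<in> (\<Union>y\<in>p ` K'. mball y \<epsilon>)"
        using \<open>x \<in> K'\<close> by blast
    qed
  qed
qed

text \<open>Off \<^term>\<open>quotient_space J\<close> the value of \<^const>\<open>qdist\<close> may be an infimum over the empty set,
  which is unspecified; cutting it to \<open>0\<close> there makes the global axioms of
  \<^locale>\<open>Metric_space\<close> hold.\<close>

definition quotient_dist :: "'a::real_normed_vector set \<Rightarrow> 'a set \<Rightarrow> 'a set \<Rightarrow> real" where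
  "quotient_dist J C D = (if C \<in> quotient_space J \<and> D \<in> quotient_space J then qdist C D else 0)"

lemma quotient_dist_qmap [simp]:
  fixes J :: "'a::real_normed_vector set"
  assumes "subspace J"
  shows "quotient_dist J (qmap J u) (qmap J v) = infdist (u - v) J"
  by (simp add: quotient_dist_def qdist_qmap[OF assms])

locale closed_subspace =
  fixes J :: "'a::banach set"
  assumes subspace: "subspace J" and closed: "closed J"
begin

sublocale Q: Metric_space "quotient_space J" "quotient_dist J"
proof
  fix C D E
  show "0 \<le> quotient_dist J C D"
    by (auto simp: quotient_dist_def quotient_space_def qdist_qmap[OF subspace] infdist_nonneg)
  show "quotient_dist J C D = quotient_dist J D C"
    by (auto simp: quotient_dist_def quotient_space_def qdist_qmap[OF subspace]
        infdist_subspace_minus_commute[OF subspace])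
  assume "C \<in> quotient_space J" "D \<in> quotient_space J"
  then obtain u v where C: "C = qmap J u" and D: "D = qmap J v"
    by (metis quotient_spaceE)
  have "J \<noteq> {}"
    using subspace_0[OF subspace] by blast
  then show "quotient_dist J C D = 0 \<longleftrightarrow> C = D"
    unfolding C D by (simp add: subspace qmap_eq_iff in_closed_iff_infdist_zero[OF closed])
  assume "E \<in> quotient_space J"
  then obtain w where E: "E = qmap J w"
    by (rule quotient_spaceE)
  show "quotient_dist J C E \<le> quotient_dist J C D + quotient_dist J D E"
    using infdist_subspace_add_le[OF subspace, of "u - v" "v - w"] unfolding C D E by (simp add: subspace)
qed

lemma limitin_qmap:
  assumes "u \<longlonglongrightarrow> U"
  shows "limitin Q.mtopology (\<lambda>n. qmap J (u n)) (qmap J U) sequentially"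
  unfolding Q.limitin_metric_dist_null
proof (intro conjI always_eventually allI qmap_in_quotient_space)
  have "(\<lambda>n. norm (u n - U)) \<longlonglongrightarrow> 0"
    using assms by (simp add: LIM_zero_iff tendsto_norm_zero)
  then show "(\<lambda>n. quotient_dist J (qmap J (u n)) (qmap J U)) \<longlonglongrightarrow> 0"
    by (rule Lim_null_comparison[rotated])
      (simp add: subspace infdist_nonneg infdist_subspace_le_norm)
qed

lemma mcomplete_quotient: "Q.mcomplete"
  unfolding Q.mcomplete_def
proof (intro allI impI)
  fix \<sigma> assume "Q.MCauchy \<sigma>"
  then obtain r where r: "strict_mono r"
    and fast: "\<And>k. quotient_dist J (\<sigma> (r k)) (\<sigma> (r (Suc k))) < (1/2)^k"
    using Q.MCauchy_fast_subsequence by blast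
  have "range \<sigma> \<subseteq> quotient_space J"
    using \<open>Q.MCauchy \<sigma>\<close> by (simp add: Q.MCauchy_def)
  then have "\<forall>k. \<exists>v. \<sigma> (r k) = qmap J v"
    unfolding quotient_space_def by blast
  then obtain v where v: "\<And>k. \<sigma> (r k) = qmap J (v k)"
    by metis
  have "summable (\<lambda>k. infdist (v (Suc k) - v k) J)"
  proof (rule summable_comparison_test'[where N=0])
    show "summable (\<lambda>k. (1/2::real)^k)"
      by simp
    show "norm (infdist (v (Suc k) - v k) J) \<le> (1/2)^k" for k
      using fast[of k] by (simp add: v subspace infdist_nonneg infdist_subspace_minus_commute)
  qed
  then obtain u where u: "\<And>k. u k - v k \<in> J" and "convergent u"
    using subspace_lift_convergent[OF subspace] by blast
  then obtain U where "u \<longlonglongrightarrow> U"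
    by (auto simp: convergent_def)
  moreover have "qmap J (u k) = \<sigma> (r k)" for k
    using u by (simp add: v qmap_eq_iff[OF subspace])
  then have "\<sigma> \<circ> r = (\<lambda>k. qmap J (u k))"
    by auto
  ultimately have "limitin Q.mtopology (\<sigma> \<circ> r) (qmap J U) sequentially"
    by (simp add: limitin_qmap)
  then show "\<exists>C. limitin Q.mtopology \<sigma> C sequentially"
    using Q.MCauchy_convergent_subsequence[OF \<open>Q.MCauchy \<sigma>\<close> r] by blast
qed

lemma limitin_quotient_iff:
  assumes "range \<sigma> \<subseteq> quotient_space J"
  shows "limitin Q.mtopology \<sigma> C sequentially \<longleftrightarrow>
    C \<in> quotient_space J \<and> (\<lambda>n. qdist (\<sigma> n) C) \<longlonglongrightarrow> 0"
proof -
  have "\<sigma> n \<in> quotient_space J" for n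
    using assms by blast
  then show ?thesis
    unfolding Q.limitin_metric_dist_null by (auto simp: quotient_dist_def always_eventually)
qed

lemma qrel_compact_iff_mtotally_bounded: "qrel_compact J S \<longleftrightarrow> Q.mtotally_bounded S"
proof (cases "S \<subseteq> quotient_space J")
  case True
  have "Q.MCauchy (\<sigma> \<circ> r) \<longleftrightarrow> (\<exists>C. C \<in> quotient_space J \<and> (\<lambda>n. qdist (\<sigma> (r n)) C) \<longlonglongrightarrow> 0)"
    if "\<forall>n. \<sigma> n \<in> S" for \<sigma> and r :: "nat \<Rightarrow> nat"
  proof -
    have range: "range (\<sigma> \<circ> r) \<subseteq> quotient_space J"
      using that True by auto
    have "Q.MCauchy (\<sigma> \<circ> r) \<longleftrightarrow> (\<exists>C. limitin Q.mtopology (\<sigma> \<circ> r) C sequentially)"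
      using mcomplete_quotient Q.convergent_imp_MCauchy[OF range] unfolding Q.mcomplete_def by blast
    then show ?thesis
      using limitin_quotient_iff[OF range] by simp
  qed
  then show ?thesis
    using True unfolding qrel_compact_def Q.mtotally_bounded_sequentially by (simp add: image_subset_iff)
next
  case False
  then show ?thesis
    using Q.mtotally_bounded_imp_subset unfolding qrel_compact_def by blast
qed

lemma qrel_compact_imp_bdd_above_qnorm:
  assumes "qrel_compact J S"
  shows "bdd_above (qnorm ` S)"
proof (cases "S = {}")
  case False
  have S: "S \<subseteq> quotient_space J"
    using assms by (simp add: qrel_compact_def)
  obtain c B where cB: "S \<subseteq> Q.mcball c B"
    using assms Q.mtotally_bounded_imp_mbounded
    unfolding qrel_compact_iff_mtotally_bounded Q.mbounded_def by blast
  moreover obtain C where "C \<in> S"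
    using False by blast
  ultimately have "c \<in> quotient_space J"
    by auto
  then obtain c0 where c: "c = qmap J c0"
    by (rule quotient_spaceE)
  have "qnorm C \<le> B + infdist c0 J" if "C \<in> S" for C
  proof -
    have "C \<in> quotient_space J"
      using that S by blast
    then obtain u where C: "C = qmap J u"
      by (rule quotient_spaceE)
    have "infdist (c0 - u) J \<le> B"
      using that cB unfolding c C by (auto simp: subspace)
    moreover have "infdist u J \<le> infdist (u - c0) J + infdist c0 J"
      using infdist_subspace_add_le[OF subspace, of "u - c0" c0] by simp
    ultimately show ?thesis
      unfolding C by (simp add: qnorm_qmap subspace infdist_subspace_minus_commute[OF subspace, of u])
  qed
  then show ?thesis
    by (rule bdd_aboveI2)
qed simp

end

section \<open>The sequence space \<open>\<ell>\<^sub>1\<close>\<close>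

definition ell1 :: "zvec set" where
  "ell1 = {a. summable (\<lambda>n. \<bar>a n\<bar>)}"

definition ell1_norm :: "zvec \<Rightarrow> real" where
  "ell1_norm a = (\<Sum>n. \<bar>a n\<bar>)"

lemma zball_ell1_iff: "a \<in> zball ell1 ell1_norm \<longleftrightarrow> summable (\<lambda>n. \<bar>a n\<bar>) \<and> (\<Sum>n. \<bar>a n\<bar>) \<le> 1"
  by (simp add: zball_def ell1_def ell1_norm_def)

lemma summable_abs_diff:
  fixes a b :: "nat \<Rightarrow> real"
  assumes "summable (\<lambda>n. \<bar>a n\<bar>)" and "summable (\<lambda>n. \<bar>b n\<bar>)"
  shows "summable (\<lambda>n. \<bar>a n - b n\<bar>)"
  by (rule summable_comparison_test'[OF summable_add[OF assms], where N=0]) simp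

lemma suminf_abs_diff_limit_le:
  fixes s :: "nat \<Rightarrow> nat \<Rightarrow> real"
  assumes lim: "\<And>k. (\<lambda>n. s n k) \<longlonglongrightarrow> f k"
    and le: "\<And>n. n \<ge> M \<Longrightarrow> summable (\<lambda>k. \<bar>g k - s n k\<bar>) \<and> (\<Sum>k. \<bar>g k - s n k\<bar>) \<le> e"
  shows "summable (\<lambda>k. \<bar>g k - f k\<bar>)" and "(\<Sum>k. \<bar>g k - f k\<bar>) \<le> e"
proof -
  have partial: "(\<Sum>k<K. \<bar>g k - f k\<bar>) \<le> e" for K
  proof (rule LIMSEQ_le_const2)
    show "(\<lambda>n. \<Sum>k<K. \<bar>g k - s n k\<bar>) \<longlonglongrightarrow> (\<Sum>k<K. \<bar>g k - f k\<bar>)"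
      by (intro tendsto_sum tendsto_rabs tendsto_diff tendsto_const lim)
    show "\<exists>N. \<forall>n\<ge>N. (\<Sum>k<K. \<bar>g k - s n k\<bar>) \<le> e"
    proof (intro exI allI impI)
      fix n assume "M \<le> n"
      then have "summable (\<lambda>k. \<bar>g k - s n k\<bar>)" and "(\<Sum>k. \<bar>g k - s n k\<bar>) \<le> e"
        using le by auto
      then show "(\<Sum>k<K. \<bar>g k - s n k\<bar>) \<le> e"
        using sum_le_suminf[of "\<lambda>k. \<bar>g k - s n k\<bar>" "{..<K}"] by simp
    qed
  qed
  show summable: "summable (\<lambda>k. \<bar>g k - f k\<bar>)"
    by (rule bounded_imp_summable[where B=e]) (use partial[of "Suc _"] in \<open>simp_all add: lessThan_Suc_atMost\<close>)
  show "(\<Sum>k. \<bar>g k - f k\<bar>) \<le> e"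
    using summable partial by (rule suminf_le_const)
qed

lemma ell1_complete:
  fixes s :: "nat \<Rightarrow> zvec"
  assumes summable: "\<And>n. summable (\<lambda>k. \<bar>s n k\<bar>)"
    and Cauchy: "\<forall>e>0. \<exists>M. \<forall>m\<ge>M. \<forall>n\<ge>M. (\<Sum>k. \<bar>s m k - s n k\<bar>) < e"
  shows "\<exists>f. summable (\<lambda>k. \<bar>f k\<bar>) \<and> (\<lambda>n. \<Sum>k. \<bar>s n k - f k\<bar>) \<longlonglongrightarrow> 0"
proof -
  have diff_summable: "summable (\<lambda>k. \<bar>s m k - s n k\<bar>)" for m n
    by (rule summable_abs_diff[OF summable[of m] summable[of n]])
  have "Cauchy (\<lambda>n. s n k)" for k
  proof (rule metric_CauchyI)
    fix e :: real assume "e > 0"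
    then obtain M where M: "\<forall>m\<ge>M. \<forall>n\<ge>M. (\<Sum>k. \<bar>s m k - s n k\<bar>) < e"
      using Cauchy by blast
    show "\<exists>M. \<forall>m\<ge>M. \<forall>n\<ge>M. dist (s m k) (s n k) < e"
    proof (intro exI allI impI)
      fix m n assume "M \<le> m" "M \<le> n"
      then have "(\<Sum>k. \<bar>s m k - s n k\<bar>) < e"
        using M by blast
      moreover have "\<bar>s m k - s n k\<bar> \<le> (\<Sum>k. \<bar>s m k - s n k\<bar>)"
        using sum_le_suminf[OF diff_summable, of "{k}"] by simp
      ultimately show "dist (s m k) (s n k) < e"
        by (simp add: dist_real_def)
    qed
  qed
  then obtain f where lim: "\<And>k. (\<lambda>n. s n k) \<longlonglongrightarrow> f k"
    unfolding Cauchy_convergent_iff convergent_def by metis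
  have tail: "\<exists>M. \<forall>m\<ge>M. summable (\<lambda>k. \<bar>s m k - f k\<bar>) \<and> (\<Sum>k. \<bar>s m k - f k\<bar>) \<le> e"
    if "e > 0" for e
  proof -
    obtain M where M: "\<forall>m\<ge>M. \<forall>n\<ge>M. (\<Sum>k. \<bar>s m k - s n k\<bar>) < e"
      using Cauchy \<open>e > 0\<close> by blast
    have "summable (\<lambda>k. \<bar>s m k - f k\<bar>) \<and> (\<Sum>k. \<bar>s m k - f k\<bar>) \<le> e" if "m \<ge> M" for m
      using suminf_abs_diff_limit_le[OF lim, where M=M and g="s m" and e=e] M that diff_summable
      by (simp add: less_imp_le)
    then show ?thesis
      by blast
  qed
  obtain M1 where M1: "summable (\<lambda>k. \<bar>s M1 k - f k\<bar>)"
    using tail[of 1] by auto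
  have "summable (\<lambda>k. \<bar>f k\<bar>)"
    using summable_abs_diff[OF summable[of M1] M1] by simp
  moreover have "(\<lambda>n. \<Sum>k. \<bar>s n k - f k\<bar>) \<longlonglongrightarrow> 0"
  proof (rule LIMSEQ_I)
    fix r :: real assume "r > 0"
    then obtain M where "\<forall>m\<ge>M. summable (\<lambda>k. \<bar>s m k - f k\<bar>) \<and> (\<Sum>k. \<bar>s m k - f k\<bar>) \<le> r/2"
      using tail[of "r/2"] by auto
    then show "\<exists>M. \<forall>n\<ge>M. norm ((\<Sum>k. \<bar>s n k - f k\<bar>) - 0) < r"
      using \<open>r > 0\<close> by (auto intro!: exI[of _ M] simp: suminf_nonneg)
  qed
  ultimately show ?thesis
    by blast
qed

lemma banach_struct_ell1: "banach_struct ell1 ell1_norm"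
  unfolding banach_struct_def
proof (intro conjI ballI allI impI)
  show "zzero \<in> ell1"
    by (simp add: ell1_def zzero_def)
  fix c and f g :: zvec
  assume f: "f \<in> ell1"
  then have sf: "summable (\<lambda>n. \<bar>f n\<bar>)"
    by (simp add: ell1_def)
  show "zscale c f \<in> ell1"
    using summable_mult[OF sf, of "\<bar>c\<bar>"] by (simp add: ell1_def zscale_def abs_mult)
  show "ell1_norm (zscale c f) = \<bar>c\<bar> * ell1_norm f"
    using suminf_mult[OF sf, of "\<bar>c\<bar>"] by (simp add: ell1_norm_def zscale_def abs_mult)
  show "0 \<le> ell1_norm f"
    using sf by (simp add: ell1_norm_def suminf_nonneg)
  show "ell1_norm f = 0 \<longleftrightarrow> f = zzero"
    using sf by (auto simp: ell1_norm_def zzero_def suminf_eq_zero_iff)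
  assume "g \<in> ell1"
  then have sg: "summable (\<lambda>n. \<bar>g n\<bar>)"
    by (simp add: ell1_def)
  have sfg: "summable (\<lambda>n. \<bar>f n + g n\<bar>)"
    using summable_abs_diff[OF sf, of "\<lambda>n. - g n"] sg by simp
  then show "zadd f g \<in> ell1"
    by (simp add: ell1_def zadd_def)
  have "(\<Sum>n. \<bar>f n + g n\<bar>) \<le> (\<Sum>n. \<bar>f n\<bar> + \<bar>g n\<bar>)"
    using sfg sf sg by (intro suminf_le summable_add) auto
  then show "ell1_norm (zadd f g) \<le> ell1_norm f + ell1_norm g"
    by (simp add: ell1_norm_def zadd_def suminf_add[OF sf sg])
next
  fix s :: "nat \<Rightarrow> zvec"
  assume "\<forall>n. s n \<in> ell1"
    and "\<forall>e>0. \<exists>M. \<forall>m\<ge>M. \<forall>n\<ge>M. ell1_norm (zadd (s m) (zscale (- 1) (s n))) < e"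
  then show "\<exists>f\<in>ell1. (\<lambda>n. ell1_norm (zadd (s n) (zscale (- 1) f))) \<longlonglongrightarrow> 0"
    using ell1_complete[of s] by (simp add: ell1_def ell1_norm_def zadd_def zscale_def)
qed

definition unit_seq :: "nat \<Rightarrow> zvec" where
  "unit_seq n = (\<lambda>k. if k = n then 1 else 0)"

lemma unit_seq_in_zball: "unit_seq n \<in> zball ell1 ell1_norm"
proof -
  have "(\<lambda>k. \<bar>unit_seq n k\<bar>) = (\<lambda>k. if k = n then 1 else 0)"
    by (simp add: unit_seq_def fun_eq_iff)
  then have "(\<lambda>k. \<bar>unit_seq n k\<bar>) sums 1"
    using sums_single[of n "\<lambda>_. 1::real"] by simp
  then show ?thesis
    by (simp add: zball_ell1_iff sums_iff)
qed

section \<open>Synthesis operators on \<open>\<ell>\<^sub>1\<close>\<close>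

definition synthesis :: "(nat \<Rightarrow> 'a::real_normed_vector) \<Rightarrow> zvec \<Rightarrow> 'a" where
  "synthesis w a = (\<Sum>n. a n *\<^sub>R w n)"

lemma synthesis_unit_seq: "synthesis w (unit_seq n) = w n"
proof -
  have "(\<lambda>k. unit_seq n k *\<^sub>R w k) = (\<lambda>k. if k = n then w k else 0)"
    by (simp add: unit_seq_def fun_eq_iff)
  then show ?thesis
    using sums_single[of n w] by (simp add: synthesis_def sums_iff)
qed

lemma summable_norm_scaleR_bounded:
  fixes w :: "nat \<Rightarrow> 'a::real_normed_vector"
  assumes "summable (\<lambda>n. \<bar>a n\<bar>)" and "\<And>n. norm (w n) \<le> B"
  shows "summable (\<lambda>n. norm (a n *\<^sub>R w n))"
  by (rule summable_comparison_test'[OF summable_mult2[OF assms(1), of B], where N=0])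
    (simp add: assms(2) mult_left_mono)

lemma lin_op_synthesis:
  fixes w :: "nat \<Rightarrow> 'a::banach"
  assumes "\<And>n. norm (w n) \<le> B"
  shows "lin_op ell1 (synthesis w)"
  unfolding lin_op_def
proof (intro conjI ballI allI)
  fix c and f g :: zvec
  assume "f \<in> ell1"
  then have sf: "summable (\<lambda>n. f n *\<^sub>R w n)"
    using summable_norm_cancel[OF summable_norm_scaleR_bounded[OF _ assms]] by (simp add: ell1_def)
  show "synthesis w (zscale c f) = c *\<^sub>R synthesis w f"
    using suminf_scaleR_right[OF sf, of c] by (simp add: synthesis_def zscale_def)
  assume "g \<in> ell1"
  then have sg: "summable (\<lambda>n. g n *\<^sub>R w n)"
    using summable_norm_cancel[OF summable_norm_scaleR_bounded[OF _ assms]] by (simp add: ell1_def)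
  show "synthesis w (zadd f g) = synthesis w f + synthesis w g"
    using suminf_add[OF sf sg] by (simp add: synthesis_def zadd_def scaleR_add_left)
qed

lemma synthesis_diff:
  fixes u w :: "nat \<Rightarrow> 'a::banach"
  assumes "\<And>n. norm (u n) \<le> B" and "\<And>n. norm (w n) \<le> B" and "a \<in> ell1"
  shows "synthesis u a - synthesis w a = synthesis (\<lambda>n. u n - w n) a"
proof -
  have "summable (\<lambda>n. \<bar>a n\<bar>)"
    using assms(3) by (simp add: ell1_def)
  then have "summable (\<lambda>n. a n *\<^sub>R u n)" and "summable (\<lambda>n. a n *\<^sub>R w n)"
    using summable_norm_cancel[OF summable_norm_scaleR_bounded] assms(1,2) by blast+
  then show ?thesis
    unfolding synthesis_def by (subst suminf_diff) (simp_all add: scaleR_diff_right)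
qed

lemma infdist_synthesis_le:
  fixes w :: "nat \<Rightarrow> 'a::banach"
  assumes "subspace J" and "\<And>n. norm (w n) \<le> B" and a: "summable (\<lambda>n. \<bar>a n\<bar>)"
    and "\<And>n. infdist (w n) J \<le> M"
  shows "infdist (synthesis w a) J \<le> (\<Sum>n. \<bar>a n\<bar>) * M"
proof -
  have summable: "summable (\<lambda>n. norm (a n *\<^sub>R w n))"
    using a assms(2) by (rule summable_norm_scaleR_bounded)
  have term_le: "infdist (a n *\<^sub>R w n) J \<le> \<bar>a n\<bar> * M" for n
    using infdist_subspace_scaleR_le[OF assms(1), of "a n" "w n"]
      mult_left_mono[OF assms(4)[of n] abs_ge_zero] by (rule order_trans)
  have "infdist (synthesis w a) J \<le> (\<Sum>n. infdist (a n *\<^sub>R w n) J)"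
    unfolding synthesis_def by (rule infdist_subspace_suminf_le(2)[OF assms(1) summable])
  also have "\<dots> \<le> (\<Sum>n. \<bar>a n\<bar> * M)"
    by (intro suminf_le term_le infdist_subspace_suminf_le(1)[OF assms(1) summable]
        summable_mult2 a)
  also have "\<dots> = (\<Sum>n. \<bar>a n\<bar>) * M"
    using a by (rule suminf_mult2[symmetric])
  finally show ?thesis .
qed

lemma synthesis_comp_eq_finite_sum:
  fixes \<phi> :: "nat \<Rightarrow> nat"
  assumes "\<And>n. \<phi> n < L" and a: "summable (\<lambda>n. \<bar>a n\<bar>)"
  shows "synthesis (w \<circ> \<phi>) a = (\<Sum>m<L. (\<Sum>n. if \<phi> n = m then a n else 0) *\<^sub>R w m)"
proof -
  have summable: "summable (\<lambda>n. if \<phi> n = m then a n else 0)" for m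
    by (rule summable_comparison_test'[OF a, where N=0]) simp
  have "(\<Sum>m<L. (if \<phi> n = m then a n else 0) *\<^sub>R w m) = a n *\<^sub>R w (\<phi> n)" for n
    using assms(1)[of n] by (simp add: if_distrib[of "\<lambda>c. c *\<^sub>R w _"] cong: if_cong)
  then have "synthesis (w \<circ> \<phi>) a = (\<Sum>n. \<Sum>m<L. (if \<phi> n = m then a n else 0) *\<^sub>R w m)"
    by (simp add: synthesis_def)
  also have "\<dots> = (\<Sum>m<L. \<Sum>n. (if \<phi> n = m then a n else 0) *\<^sub>R w m)"
    using summable by (intro suminf_sum summable_scaleR_left)
  also have "\<dots> = (\<Sum>m<L. (\<Sum>n. if \<phi> n = m then a n else 0) *\<^sub>R w m)"
    using summable by (intro sum.cong refl suminf_scaleR_left[symmetric])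
  finally show ?thesis .
qed

definition unit_combinations :: "(nat \<Rightarrow> 'a::real_normed_vector) \<Rightarrow> nat \<Rightarrow> 'a set" where
  "unit_combinations w L = {\<Sum>m<L. b m *\<^sub>R w m | b. \<forall>m<L. \<bar>b m\<bar> \<le> 1}"

lemma unit_combinations_Suc:
  "unit_combinations w (Suc L) = (\<lambda>(p, c). p + c *\<^sub>R w L) ` (unit_combinations w L \<times> {-1..1})"
proof (intro equalityI subsetI)
  fix x assume "x \<in> unit_combinations w (Suc L)"
  then obtain b where b: "\<forall>m<Suc L. \<bar>b m\<bar> \<le> 1" and x: "x = (\<Sum>m<Suc L. b m *\<^sub>R w m)"
    by (auto simp: unit_combinations_def)
  then have "((\<Sum>m<L. b m *\<^sub>R w m), b L) \<in> unit_combinations w L \<times> {-1..1}"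
    by (auto simp: unit_combinations_def abs_le_iff)
  then show "x \<in> (\<lambda>(p, c). p + c *\<^sub>R w L) ` (unit_combinations w L \<times> {-1..1})"
    unfolding x by force
next
  fix x assume "x \<in> (\<lambda>(p, c). p + c *\<^sub>R w L) ` (unit_combinations w L \<times> {-1..1})"
  then obtain b c where b: "\<forall>m<L. \<bar>b m\<bar> \<le> 1" and c: "\<bar>c\<bar> \<le> 1"
    and x: "x = (\<Sum>m<L. b m *\<^sub>R w m) + c *\<^sub>R w L"
    by (auto simp: unit_combinations_def abs_le_iff)
  have "(\<Sum>m<L. (b(L := c)) m *\<^sub>R w m) = (\<Sum>m<L. b m *\<^sub>R w m)"
    by (rule sum.cong) auto
  then have "x = (\<Sum>m<Suc L. (b(L := c)) m *\<^sub>R w m)"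
    unfolding x by simp
  moreover have "\<forall>m<Suc L. \<bar>(b(L := c)) m\<bar> \<le> 1"
    using b c by (simp add: less_Suc_eq)
  ultimately show "x \<in> unit_combinations w (Suc L)"
    unfolding unit_combinations_def by blast
qed

lemma compact_unit_combinations: "compact (unit_combinations w L)"
proof (induction L)
  case 0
  then show ?case
    by (simp add: unit_combinations_def)
next
  case (Suc L)
  have "continuous_on (unit_combinations w L \<times> {-1..1}) (\<lambda>(p, c). p + c *\<^sub>R w L)"
    by (simp add: case_prod_unfold continuous_intros)
  then show ?case
    unfolding unit_combinations_Suc using Suc
    by (intro compact_continuous_image compact_Times compact_Icc)
qed

lemma synthesis_near_unit_combinations:
  fixes w :: "nat \<Rightarrow> 'a::banach" and \<phi> :: "nat \<Rightarrow> nat"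
  assumes "subspace J" and bounded: "\<And>n. norm (w n) \<le> B"
    and \<phi>: "\<And>n. \<phi> n < L" "\<And>n. infdist (w (\<phi> n) - w n) J \<le> \<epsilon>"
    and a: "a \<in> zball ell1 ell1_norm"
  shows "\<exists>v\<in>unit_combinations w L. infdist (v - synthesis w a) J \<le> \<epsilon>"
proof (intro bexI)
  have a1: "summable (\<lambda>n. \<bar>a n\<bar>)" "(\<Sum>n. \<bar>a n\<bar>) \<le> 1"
    using a by (auto simp: zball_ell1_iff)
  have "\<bar>\<Sum>n. if \<phi> n = m then a n else 0\<bar> \<le> 1" for m
  proof -
    have "summable (\<lambda>n. \<bar>if \<phi> n = m then a n else 0\<bar>)"
      by (rule summable_comparison_test'[OF a1(1), where N=0]) simp
    then have "\<bar>\<Sum>n. if \<phi> n = m then a n else 0\<bar> \<le> (\<Sum>n. \<bar>if \<phi> n = m then a n else 0\<bar>)"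
      by (rule summable_rabs)
    also have "\<dots> \<le> (\<Sum>n. \<bar>a n\<bar>)"
      using \<open>summable (\<lambda>n. \<bar>if \<phi> n = m then a n else 0\<bar>)\<close> a1(1) by (intro suminf_le) auto
    finally show ?thesis
      using a1(2) by simp
  qed
  then show "synthesis (w \<circ> \<phi>) a \<in> unit_combinations w L"
    unfolding synthesis_comp_eq_finite_sum[OF \<phi>(1) a1(1)] unit_combinations_def
    by (auto intro!: exI[of _ "\<lambda>m. \<Sum>n. if \<phi> n = m then a n else 0"])
  have "synthesis (w \<circ> \<phi>) a - synthesis w a = synthesis (\<lambda>n. (w \<circ> \<phi>) n - w n) a"
    using bounded a by (intro synthesis_diff[where B=B]) (auto simp: zball_def)
  also have "infdist \<dots> J \<le> (\<Sum>n. \<bar>a n\<bar>) * \<epsilon>"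
  proof (rule infdist_synthesis_le[OF assms(1) _ a1(1)])
    show "norm ((w \<circ> \<phi>) n - w n) \<le> 2 * B" for n
      using norm_triangle_ineq4[of "w (\<phi> n)" "w n"] bounded[of n] bounded[of "\<phi> n"] by simp
    show "infdist ((w \<circ> \<phi>) n - w n) J \<le> \<epsilon>" for n
      using \<phi>(2) by simp
  qed
  also have "\<dots> \<le> \<epsilon>"
  proof -
    have "0 \<le> \<epsilon>"
      using \<phi>(2)[of 0] infdist_nonneg order_trans by blast
    then show ?thesis
      using mult_right_mono[OF a1(2)] by simp
  qed
  finally show "infdist (synthesis (w \<circ> \<phi>) a - synthesis w a) J \<le> \<epsilon>" .
qed

lemma qlin_op_qmap_comp:
  assumes "subspace J" and "lin_op Z S"
  shows "qlin_op J Z (\<lambda>z. qmap J (S z))"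
  unfolding qlin_op_def
proof (intro conjI ballI allI qmap_in_quotient_space)
  fix c f g a b
  assume "f \<in> Z" and a: "a \<in> qmap J (S f)"
  then have "c *\<^sub>R a - c *\<^sub>R S f \<in> J"
    using subspace_scale[OF assms(1), of "a - S f" c] by (simp add: mem_qmap_iff scaleR_diff_right)
  then have "qmap J (c *\<^sub>R a) = qmap J (S (zscale c f))"
    using assms \<open>f \<in> Z\<close> by (simp add: lin_op_def qmap_eq_iff)
  then show "qmap J (S (zscale c f)) = qmap J (c *\<^sub>R a)"
    by (rule sym)
  assume "g \<in> Z" and b: "b \<in> qmap J (S g)"
  then have "(a - S f) + (b - S g) \<in> J"
    using a by (simp add: mem_qmap_iff subspace_add[OF assms(1)])
  then have "qmap J (a + b) = qmap J (S (zadd f g))"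
    using assms \<open>f \<in> Z\<close> \<open>g \<in> Z\<close> by (simp add: lin_op_def qmap_eq_iff algebra_simps)
  then show "qmap J (S (zadd f g)) = qmap J (a + b)"
    by (rule sym)
qed

lemma qop_norm_qmap_synthesis_le:
  fixes w :: "nat \<Rightarrow> 'a::banach"
  assumes "subspace J" and "\<And>n. norm (w n) \<le> B" and "\<And>n. infdist (w n) J \<le> M"
  shows "qop_norm ell1 ell1_norm (\<lambda>a. qmap J (synthesis w a)) \<le> M"
  unfolding qop_norm_def
proof (rule cSUP_least)
  show "zball ell1 ell1_norm \<noteq> {}"
    using unit_seq_in_zball by blast
  fix a assume "a \<in> zball ell1 ell1_norm"
  then have a: "summable (\<lambda>n. \<bar>a n\<bar>)" "(\<Sum>n. \<bar>a n\<bar>) \<le> 1"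
    by (auto simp: zball_ell1_iff)
  have "0 \<le> M"
    using assms(3)[of 0] infdist_nonneg order_trans by blast
  have "infdist (synthesis w a) J \<le> (\<Sum>n. \<bar>a n\<bar>) * M"
    using assms(1,2) a(1) assms(3) by (rule infdist_synthesis_le)
  also have "\<dots> \<le> M"
    using mult_right_mono[OF a(2) \<open>0 \<le> M\<close>] by simp
  finally show "qnorm (qmap J (synthesis w a)) \<le> M"
    by (simp add: qnorm_qmap assms(1))
qed

context closed_subspace
begin

lemma mtotally_bounded_qmap_synthesis:
  assumes bounded: "\<And>n. norm (w n) \<le> B"
    and tb: "Q.mtotally_bounded (range (\<lambda>n. qmap J (w n)))"
  shows "Q.mtotally_bounded ((\<lambda>a. qmap J (synthesis w a)) ` zball ell1 ell1_norm)"
proof (rule Q.mtotally_bounded_of_finite_nets)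
  show "(\<lambda>a. qmap J (synthesis w a)) ` zball ell1 ell1_norm \<subseteq> quotient_space J"
    by auto
  fix \<epsilon> :: real assume "\<epsilon> > 0"
  then obtain K where K: "finite K" "K \<subseteq> range (\<lambda>n. qmap J (w n))"
    "range (\<lambda>n. qmap J (w n)) \<subseteq> (\<Union>C\<in>K. Q.mball C (\<epsilon>/2))"
    using tb unfolding Q.mtotally_bounded_def by (meson half_gt_zero)
  obtain L where L: "K \<subseteq> (\<lambda>n. qmap J (w n)) ` {..<L}"
    using finite_subset_image[OF K(1,2)] finite_nat_bounded by (metis image_mono order_trans)
  have "\<exists>m<L. infdist (w m - w n) J \<le> \<epsilon>/2" for n
  proof -
    obtain m where "m < L" "qmap J (w n) \<in> Q.mball (qmap J (w m)) (\<epsilon>/2)"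
      using K(3) L by blast
    then show ?thesis
      by (auto simp: subspace)
  qed
  then obtain \<phi> where \<phi>: "\<And>n. \<phi> n < L" "\<And>n. infdist (w (\<phi> n) - w n) J \<le> \<epsilon>/2"
    by metis
  have "\<epsilon>/2 > 0"
    using \<open>\<epsilon> > 0\<close> by simp
  then obtain P where P: "finite P" "P \<subseteq> unit_combinations w L"
    "unit_combinations w L \<subseteq> (\<Union>p\<in>P. ball p (\<epsilon>/2))"
    using seq_compact_imp_totally_bounded[OF compact_imp_seq_compact[OF compact_unit_combinations],
        rule_format, of "\<epsilon>/2" w L]
    by blast
  show "\<exists>K. finite K \<and> K \<subseteq> quotient_space J \<and>
      (\<lambda>a. qmap J (synthesis w a)) ` zball ell1 ell1_norm \<subseteq> (\<Union>C\<in>K. Q.mball C \<epsilon>)"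
  proof (intro exI conjI image_subsetI)
    show "finite (qmap J ` P)" and "qmap J ` P \<subseteq> quotient_space J"
      using P(1) by auto
    fix a assume a: "a \<in> zball ell1 ell1_norm"
    obtain v where v: "v \<in> unit_combinations w L" "infdist (v - synthesis w a) J \<le> \<epsilon>/2"
      using synthesis_near_unit_combinations[where w=w and \<phi>=\<phi>, OF subspace bounded \<phi> a] by blast
    then obtain p where p: "p \<in> P" "dist p v < \<epsilon>/2"
      using P(3) by auto
    have "infdist (p - synthesis w a) J \<le> infdist (p - v) J + infdist (v - synthesis w a) J"
      using infdist_subspace_add_le[OF subspace, of "p - v" "v - synthesis w a"] by simp
    also have "\<dots> < \<epsilon>"
      using p(2) v(2) infdist_subspace_le_norm[OF subspace, of "p - v"] by (simp add: dist_norm)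
    finally have "qmap J (synthesis w a) \<in> Q.mball (qmap J p) \<epsilon>"
      by (simp add: subspace)
    then show "qmap J (synthesis w a) \<in> (\<Union>C\<in>qmap J ` P. Q.mball C \<epsilon>)"
      using p(1) by blast
  qed
qed

lemma qcompact_op_qmap_synthesis:
  assumes "\<And>n. norm (w n) \<le> B" and "qrel_compact J (range (\<lambda>n. qmap J (w n)))"
  shows "qcompact_op J ell1 ell1_norm (\<lambda>a. qmap J (synthesis w a))"
  using qlin_op_qmap_comp[OF subspace lin_op_synthesis[where w=w, OF assms(1)]]
    mtotally_bounded_qmap_synthesis[where w=w, OF assms(1)] assms(2)
  unfolding qcompact_op_def qrel_compact_iff_mtotally_bounded by blast

lemma CQLP_synthesis_lift:
  assumes "CQLP J" and "\<And>n. norm (w n) \<le> B" and "\<And>n. infdist (w n) J \<le> M"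
    and "qrel_compact J (range (\<lambda>n. qmap J (w n)))"
  obtains S where "compact_op ell1 ell1_norm S"
    and "\<And>a. a \<in> ell1 \<Longrightarrow> qmap J (S a) = qmap J (synthesis w a)"
    and "op_norm ell1 ell1_norm S \<le> M"
proof -
  obtain S where "compact_op ell1 ell1_norm S" "\<forall>a\<in>ell1. qmap J (S a) = qmap J (synthesis w a)"
    "op_norm ell1 ell1_norm S = qop_norm ell1 ell1_norm (\<lambda>a. qmap J (synthesis w a))"
    using assms(1) banach_struct_ell1 qcompact_op_qmap_synthesis[where w=w, OF assms(2,4)]
    unfolding CQLP_def by blast
  moreover have "qop_norm ell1 ell1_norm (\<lambda>a. qmap J (synthesis w a)) \<le> M"
    by (rule qop_norm_qmap_synthesis_le[where w=w, OF subspace assms(2,3)])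
  ultimately show ?thesis
    using that by simp
qed

end

lemma norm_le_op_norm:
  assumes "compact_op Z N S" and "z \<in> zball Z N"
  shows "norm (S z) \<le> op_norm Z N S"
proof -
  have "bounded (closure (S ` zball Z N))"
    using assms(1) by (simp add: compact_op_def compact_imp_bounded)
  then have "bdd_above (norm ` S ` zball Z N)"
    by (meson bdd_above_norm bounded_subset closure_subset)
  then show ?thesis
    unfolding op_norm_def image_image by (rule cSUP_upper[OF assms(2)])
qed

lemma compact_closure_subset:
  assumes "compact (closure S)" and "T \<subseteq> S"
  shows "compact (closure T)"
proof -
  have "closure T = closure S \<inter> closure T"
    using closure_mono[OF assms(2)] by blast
  then show ?thesis
    using assms(1) by (metis closed_closure compact_Int_closed)
qed

lemma compact_op_unit_seq:
  assumes "compact_op ell1 ell1_norm S" and "op_norm ell1 ell1_norm S \<le> M"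
  shows "compact (closure (range (\<lambda>n. S (unit_seq n))))" and "norm (S (unit_seq n)) \<le> M"
proof -
  show "compact (closure (range (\<lambda>n. S (unit_seq n))))"
    using assms(1) unit_seq_in_zball unfolding compact_op_def by (blast intro: compact_closure_subset)
  show "norm (S (unit_seq n)) \<le> M"
    using norm_le_op_norm[OF assms(1) unit_seq_in_zball] assms(2) by (rule order_trans)
qed

lemma cSUP_eq_if_squeezed:
  fixes f g :: "'a \<Rightarrow> real"
  assumes "bdd_above (range f)" and "\<And>n. f n \<le> g n" and "\<And>n. g n \<le> (SUP n. f n)"
  shows "(SUP n. g n) = (SUP n. f n)"
proof (rule antisym)
  show "(SUP n. g n) \<le> (SUP n. f n)"
    using assms(3) by (rule cSUP_least[OF UNIV_not_empty])
  have "bdd_above (range g)"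
    using assms(3) by (rule bdd_aboveI2)
  then show "(SUP n. f n) \<le> (SUP n. g n)"
    using assms(2) by (intro cSUP_mono) auto
qed

theorem proposition3:
  fixes J :: "'a::banach set" and x :: "nat \<Rightarrow> 'a"
  assumes "subspace J" and "closed J"
    and "CQLP J"
    and "qrel_compact J (range (\<lambda>n. qmap J (x n)))"
  shows "\<exists>z :: nat \<Rightarrow> 'a. compact (closure (range z)) \<and> (\<forall>n. qmap J (z n) = qmap J (x n)) \<and>
           (SUP n. norm (z n)) = (SUP n. qnorm (qmap J (x n)))"
proof -
  interpret closed_subspace J
    using assms(1,2) by unfold_locales
  define M where "M = (SUP n. qnorm (qmap J (x n)))"
  have bdd: "bdd_above (range (\<lambda>n. qnorm (qmap J (x n))))"
    using qrel_compact_imp_bdd_above_qnorm[OF assms(4)] by (simp add: image_image)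
  have x_infdist: "infdist (x n) J \<le> M" for n
    using cSUP_upper[OF UNIV_I bdd, of n] by (simp add: M_def qnorm_qmap[OF subspace])
  have "\<exists>y. qmap J y = qmap J (x n) \<and> norm y < infdist (x n) J + 1" for n
    using qmap_lift_norm_less[OF subspace, of "x n"] by (metis less_add_one)
  then obtain w where w: "\<And>n. qmap J (w n) = qmap J (x n)"
    and w_norm: "\<And>n. norm (w n) < infdist (x n) J + 1"
    by metis
  have w_infdist: "infdist (w n) J \<le> M" for n
    using x_infdist[of n] by (metis qnorm_qmap[OF subspace] w)
  have w_bounded: "norm (w n) \<le> M + 1" for n
    using w_norm[of n] x_infdist[of n] by linarith
  have "qrel_compact J (range (\<lambda>n. qmap J (w n)))"
    using assms(4) by (simp add: w)
  then obtain S where S: "compact_op ell1 ell1_norm S"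
    "\<And>a. a \<in> ell1 \<Longrightarrow> qmap J (S a) = qmap J (synthesis w a)"
    and S_norm: "op_norm ell1 ell1_norm S \<le> M"
    using CQLP_synthesis_lift[where w=w, OF assms(3) w_bounded w_infdist] by blast
  define z where "z n = S (unit_seq n)" for n
  have z_lift: "qmap J (z n) = qmap J (x n)" for n
    using S(2)[of "unit_seq n"] unit_seq_in_zball[of n] by (simp add: z_def zball_def synthesis_unit_seq w)
  have z_ge: "qnorm (qmap J (x n)) \<le> norm (z n)" for n
    using infdist_subspace_le_norm[OF subspace] by (simp flip: z_lift add: qnorm_qmap[OF subspace])
  have z_le: "norm (z n) \<le> M" for n
    unfolding z_def by (rule compact_op_unit_seq(2)[OF S(1) S_norm])
  have "(SUP n. norm (z n)) = M"
    unfolding M_def using z_ge z_le[unfolded M_def] by (rule cSUP_eq_if_squeezed[OF bdd])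
  moreover have "compact (closure (range z))"
    unfolding z_def by (rule compact_op_unit_seq(1)[OF S(1) S_norm])
  ultimately show ?thesis
    using z_lift unfolding M_def by blast
qed

end
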